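(* Let $k\ge1$, $\alpha\in\mathrm{ASP}$ and $\beta\in\mathrm{EA}_k$ with $k>\mathrm{sci}(\alpha)+\mathrm{inv}_k(\beta)$. Then $\mathrm{sci}(\alpha\star\beta)\le\mathrm{sci}(\alpha)+\mathrm{inv}_k(\beta)$.
   Context: $\mathrm{ASP}$ denotes the group of almost-sign-preserving permutations: bijections $\alpha:\mathbb Z\to\mathbb Z$ such that $n$ and $\alpha(n)$ have the same sign for all but finitely many $n$ (here "same sign" means both positive or both nonpositive). $\mathrm{EA}_k$ is the group of bijections $\tau:\mathbb Z\to\mathbb Z$ with $\tau(n+k)=\tau(n)+k$ for all $n$ (these lie in $\mathrm{ASP}$). For $\alpha\in\mathrm{ASP}$ let $s_\alpha(a,b)=\#\{\ell\ge b:\ \alpha(\ell)<a\}$. The Demazure product $\star$ is the (unique, well-defined, associative) operation on $\mathrm{ASP}$ characterized by $s_{\alpha\star\beta}(a,b)=\min_{\ell\in\mathbb Z}\big(s_\alpha(a,\ell)+s_\beta(\ell,b)\big)$ for all $a,b\in\mathbb Z$. An inversion of a bijection $\tau$ is a pair $(a,b)$ with $a<b$, $\tau(a)>\tau(b)$; two inversions $(a,b),(a',b')$ are $k$-equivalent if $a-a'=b-b'\equiv0\pmod k$; $\mathrm{inv}_k(\tau)$ is the number of $k$-equivalence classes of inversions. A sign-changing inversion of $\alpha$ is a pair $(x,y)$ with $x<y$ and $\alpha(x)>0\ge\alpha(y)$; $\mathrm{sci}(\alpha)$ is the number of these. *)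

theory Defs
  imports Main
begin

definition same_sign :: "int \<Rightarrow> int \<Rightarrow> bool" where
  "same_sign m n \<longleftrightarrow> (0 < m \<longleftrightarrow> 0 < n)"

definition ASP :: "(int \<Rightarrow> int) set" where
  "ASP = {\<alpha>. bij \<alpha> \<and> finite {n. \<not> same_sign n (\<alpha> n)}}"

definition EA :: "int \<Rightarrow> (int \<Rightarrow> int) set" where
  "EA k = {\<tau>. bij \<tau> \<and> (\<forall>n. \<tau> (n + k) = \<tau> n + k)}"

definition s_fun :: "(int \<Rightarrow> int) \<Rightarrow> int \<Rightarrow> int \<Rightarrow> nat" where
  "s_fun \<alpha> a b = card {l. l \<ge> b \<and> \<alpha> l < a}"

text \<open>Demazure product, via its characterization by the s-functions
  (the paper asserts existence and uniqueness within ASP).\<close>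
definition demazure :: "(int \<Rightarrow> int) \<Rightarrow> (int \<Rightarrow> int) \<Rightarrow> (int \<Rightarrow> int)" (infixl "\<star>" 70) where
  "demazure \<alpha> \<beta> = (THE \<gamma>. \<gamma> \<in> ASP \<and>
     (\<forall>a b. s_fun \<gamma> a b = (LEAST m. \<exists>l. m = s_fun \<alpha> a l + s_fun \<beta> l b)))"

definition inversions :: "(int \<Rightarrow> int) \<Rightarrow> (int \<times> int) set" where
  "inversions \<tau> = {(a, b). a < b \<and> \<tau> a > \<tau> b}"

definition k_equiv :: "int \<Rightarrow> ((int \<times> int) \<times> (int \<times> int)) set" where
  "k_equiv k = {((a, b), (a', b')). a - a' = b - b' \<and> k dvd (a - a')}"

definition inv_k :: "int \<Rightarrow> (int \<Rightarrow> int) \<Rightarrow> nat" where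
  "inv_k k \<tau> = card (inversions \<tau> // (k_equiv k \<inter> (inversions \<tau> \<times> inversions \<tau>)))"

definition sci :: "(int \<Rightarrow> int) \<Rightarrow> nat" where
  "sci \<alpha> = card {(x, y). x < y \<and> \<alpha> x > 0 \<and> \<alpha> y \<le> 0}"

end

theory Submission
  imports Defs
begin

text \<open>The rank functions \<open>s_fun\<close> turn the Demazure product into the associative min-plus product.
  Peeling descents off \<open>\<beta> \<in> EA k\<close> writes it as a translation followed by \<open>inv_k k \<beta>\<close> affine
  simple reflections \<open>s\<^sub>i\<close>, each removing one class of inversions; accordingly \<open>\<alpha> \<star> \<beta>\<close> is
  reached from a translate of \<open>\<alpha>\<close> by forming \<open>\<gamma> \<star> s\<^sub>i\<close> repeatedly, which swaps the ascents
  \<open>(x, x + 1)\<close>, \<open>x \<equiv> i (mod k)\<close>, of \<open>\<gamma>\<close>. Such a step creates at most one new sign-changing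
  inversion: two ascents from a nonpositive to a positive value in one residue class are at least
  \<open>k\<close> apart, and everything in between already yields \<open>k - 1\<close> sign-changing inversions.\<close>

section \<open>The rank function\<close>

lemma finite_s_fun_set:
  assumes "\<gamma> \<in> ASP"
  shows "finite {l. l \<ge> b \<and> \<gamma> l < a}"
proof -
  have "{l. l \<ge> b \<and> \<gamma> l < a} \<subseteq> {n. \<not> same_sign n (\<gamma> n)} \<union> {b..0} \<union> \<gamma> -` {1..<a}"
    by (auto simp: same_sign_def)
  moreover have "finite (\<gamma> -` {1..<a})"
    using assms by (intro finite_vimageI) (auto simp: ASP_def bij_def)
  ultimately show ?thesis
    using assms by (auto simp: ASP_def intro: finite_subset)
qed

lemma s_fun_step:
  assumes "\<gamma> \<in> ASP"
  shows "s_fun \<gamma> a b = s_fun \<gamma> a (b + 1) + (if \<gamma> b < a then 1 else 0)"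
proof -
  have "{l. l \<ge> b \<and> \<gamma> l < a} = (if \<gamma> b < a then insert b else id) {l. l \<ge> b + 1 \<and> \<gamma> l < a}"
    by (auto simp: le_less)
  then show ?thesis
    using finite_s_fun_set[OF assms, of "b + 1" a] by (simp add: s_fun_def)
qed

lemma s_fun_antimono:
  assumes "\<gamma> \<in> ASP" "b \<le> l"
  shows "s_fun \<gamma> a l \<le> s_fun \<gamma> a b"
  using assms(2)
proof (induction l rule: int_ge_induct)
  case (step l)
  then show ?case using s_fun_step[OF assms(1), of a l] by linarith
qed simp

lemma s_fun_le_add_dist:
  assumes "\<gamma> \<in> ASP" "b \<le> l"
  shows "s_fun \<gamma> a b \<le> s_fun \<gamma> a l + nat (l - b)"
  using assms(2)
proof (induction l rule: int_ge_induct)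
  case (step l)
  then have "nat (l + 1 - b) = nat (l - b) + 1" by simp
  then show ?case using step s_fun_step[OF assms(1), of a l] by (cases "\<gamma> l < a") simp_all
qed simp

lemma ASP_eqI_s_fun:
  assumes "\<gamma> \<in> ASP" "\<delta> \<in> ASP" "\<And>a b. s_fun \<gamma> a b = s_fun \<delta> a b"
  shows "\<gamma> = \<delta>"
proof
  fix b
  have "\<gamma> b < a \<longleftrightarrow> \<delta> b < a" for a
    using s_fun_step[OF assms(1), of a b] s_fun_step[OF assms(2), of a b] assms(3)[of a b]
      assms(3)[of a "b + 1"]
    by (auto split: if_splits)
  from this[of "\<gamma> b + 1"] this[of "\<delta> b + 1"] show "\<gamma> b = \<delta> b" by auto
qed

section \<open>The min-plus product\<close>

definition minplus :: "('a \<Rightarrow> 'b \<Rightarrow> nat) \<Rightarrow> ('b \<Rightarrow> 'c \<Rightarrow> nat) \<Rightarrow> 'a \<Rightarrow> 'c \<Rightarrow> nat" where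
  "minplus F G a b = (LEAST m. \<exists>l. m = F a l + G l b)"

lemma minplus_le: "minplus F G a b \<le> F a l + G l b"
  unfolding minplus_def by (rule Least_le) blast

lemma minplus_attained: "\<exists>l. minplus F G a b = F a l + G l b"
  unfolding minplus_def by (rule LeastI_ex) blast

lemma minplus_eqI:
  assumes "\<And>l. m \<le> F a l + G l b" "m = F a l\<^sub>0 + G l\<^sub>0 b"
  shows "minplus F G a b = m"
  unfolding minplus_def using assms by (intro Least_equality) auto

lemma minplus_assoc: "minplus (minplus F G) H = minplus F (minplus G H)"
proof (intro ext antisym)
  fix a b
  obtain l m where l: "minplus F (minplus G H) a b = F a l + minplus G H l b"
    and m: "minplus G H l b = G l m + H m b"
    using minplus_attained by metis
  show "minplus (minplus F G) H a b \<le> minplus F (minplus G H) a b"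
    using minplus_le[of "minplus F G" H a b m] minplus_le[of F G a m l] l m by simp
next
  fix a b
  obtain l m where l: "minplus (minplus F G) H a b = minplus F G a l + H l b"
    and m: "minplus F G a l = F a m + G m l"
    using minplus_attained by metis
  show "minplus F (minplus G H) a b \<le> minplus (minplus F G) H a b"
    using minplus_le[of F "minplus G H" a b m] minplus_le[of G H m b l] l m by simp
qed

lemma demazure_eqI:
  assumes "\<gamma> \<in> ASP" "\<And>a b. s_fun \<gamma> a b = minplus (s_fun \<alpha>) (s_fun \<beta>) a b"
  shows "\<alpha> \<star> \<beta> = \<gamma>"
  unfolding demazure_def
proof (rule the_equality)
  show "\<gamma> \<in> ASP \<and> (\<forall>a b. s_fun \<gamma> a b = (LEAST m. \<exists>l. m = s_fun \<alpha> a l + s_fun \<beta> l b))"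
    using assms by (simp add: minplus_def)
next
  fix \<delta>
  assume "\<delta> \<in> ASP \<and> (\<forall>a b. s_fun \<delta> a b = (LEAST m. \<exists>l. m = s_fun \<alpha> a l + s_fun \<beta> l b))"
  then show "\<delta> = \<gamma>"
    using assms by (intro ASP_eqI_s_fun) (auto simp: minplus_def)
qed

lemma ASP_comp_bounded_displacement:
  assumes "\<gamma> \<in> ASP" "bij \<sigma>" "\<And>x. \<bar>\<sigma> x - x\<bar> \<le> C"
  shows "\<gamma> \<circ> \<sigma> \<in> ASP"
proof -
  have "{n. \<not> same_sign n ((\<gamma> \<circ> \<sigma>) n)} \<subseteq> \<sigma> -` {n. \<not> same_sign n (\<gamma> n)} \<union> {-C..C}"
  proof
    fix n
    assume "n \<in> {n. \<not> same_sign n ((\<gamma> \<circ> \<sigma>) n)}"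
    then show "n \<in> \<sigma> -` {n. \<not> same_sign n (\<gamma> n)} \<union> {-C..C}"
      using assms(3)[of n] by (auto simp: same_sign_def abs_le_iff)
  qed
  moreover have "finite (\<sigma> -` {n. \<not> same_sign n (\<gamma> n)})"
    using assms(1,2) by (intro finite_vimageI) (auto simp: ASP_def bij_def)
  ultimately show ?thesis
    using assms(1,2) by (auto simp: ASP_def bij_comp intro: finite_subset)
qed

lemma EA_add_mult_period:
  assumes "\<beta> \<in> EA k"
  shows "\<beta> (x + j * k) = \<beta> x + j * k"
proof (induction j rule: int_induct[of _ 0])
  case (step1 j)
  have "\<beta> (x + j * k + k) = \<beta> (x + j * k) + k"
    using assms by (simp add: EA_def)
  then show ?case using step1 by (simp add: algebra_simps)
next
  case (step2 j)
  have "\<beta> (x + (j - 1) * k + k) = \<beta> (x + (j - 1) * k) + k"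
    using assms by (simp add: EA_def)
  then show ?case using step2 by (simp add: algebra_simps)
qed simp

lemma EA_displacement_bounded:
  assumes "\<beta> \<in> EA k" "k \<ge> 1"
  obtains C where "\<And>x. \<bar>\<beta> x - x\<bar> \<le> C"
proof -
  have "\<bar>\<beta> x - x\<bar> \<le> Max ((\<lambda>y. \<bar>\<beta> y - y\<bar>) ` {0..<k})" for x
  proof -
    let ?r = "x mod k"
    have "\<beta> x = \<beta> ?r + (x div k) * k"
      using EA_add_mult_period[OF assms(1), of ?r "x div k"] by simp
    then have "\<bar>\<beta> x - x\<bar> = \<bar>\<beta> ?r - ?r\<bar>"
      by (metis add_diff_cancel_right mod_div_mult_eq diff_diff_eq)
    also have "\<dots> \<le> Max ((\<lambda>y. \<bar>\<beta> y - y\<bar>) ` {0..<k})"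
      using assms(2) by (intro Max_ge) auto
    finally show ?thesis .
  qed
  then show ?thesis using that by blast
qed

lemma EA_subset_ASP:
  assumes "k \<ge> 1"
  shows "EA k \<subseteq> ASP"
proof
  fix \<beta>
  assume \<beta>: "\<beta> \<in> EA k"
  obtain C where "\<And>x. \<bar>\<beta> x - x\<bar> \<le> C" using EA_displacement_bounded[OF \<beta> assms] by blast
  moreover have "id \<in> ASP" by (simp add: ASP_def same_sign_def)
  ultimately have "id \<circ> \<beta> \<in> ASP"
    using \<beta> by (intro ASP_comp_bounded_displacement) (auto simp: EA_def)
  then show "\<beta> \<in> ASP" by simp
qed

lemma s_fun_translation: "s_fun (\<lambda>x. x + c) l b = nat (l - c - b)"
proof -
  have "{x. x \<ge> b \<and> x + c < l} = {b..<l - c}" by auto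
  then show ?thesis by (simp add: s_fun_def)
qed

lemma s_fun_comp_translation: "s_fun (\<gamma> \<circ> (\<lambda>x. x + c)) a b = s_fun \<gamma> a (b + c)"
proof -
  have "{l. l \<ge> b \<and> (\<gamma> \<circ> (\<lambda>x. x + c)) l < a} = (\<lambda>x. x - c) ` {l. l \<ge> b + c \<and> \<gamma> l < a}"
    by (auto intro: image_eqI[of _ _ "_ + c"])
  moreover have "inj (\<lambda>x::int. x - c)" by (simp add: inj_def)
  ultimately show ?thesis by (simp add: s_fun_def card_image inj_on_subset)
qed

lemma minplus_s_fun_translation:
  assumes "\<gamma> \<in> ASP"
  shows "minplus (s_fun \<gamma>) (s_fun (\<lambda>x. x + c)) a b = s_fun \<gamma> a (b + c)"
proof (rule minplus_eqI[where l\<^sub>0 = "b + c"])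
  fix l
  show "s_fun \<gamma> a (b + c) \<le> s_fun \<gamma> a l + s_fun (\<lambda>x. x + c) l b"
    using s_fun_le_add_dist[OF assms, of "b + c" l a] s_fun_antimono[OF assms, of l "b + c" a]
    by (cases "b + c \<le> l") (simp_all add: s_fun_translation algebra_simps)
qed (simp add: s_fun_translation)

lemma ASP_comp_translation:
  assumes "\<gamma> \<in> ASP"
  shows "\<gamma> \<circ> (\<lambda>x. x + c) \<in> ASP"
proof (rule ASP_comp_bounded_displacement[OF assms, where C = "\<bar>c\<bar>"])
  show "bij (\<lambda>x::int. x + c)" by (rule bijI) (auto simp: inj_def surj_def intro: exI[of _ "_ - c"])
qed simp

section \<open>Conditional swaps and affine simple reflections\<close>

text \<open>For \<open>x \<equiv> i (mod k)\<close> the positions \<open>x\<close> and \<open>x + 1\<close> are exchanged exactly when \<open>P x\<close>;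
  for \<open>P = (\<lambda>_. True)\<close> this is the affine simple reflection \<open>s\<^sub>i\<close> of period \<open>k\<close>.\<close>

definition cswap :: "int \<Rightarrow> int \<Rightarrow> (int \<Rightarrow> bool) \<Rightarrow> int \<Rightarrow> int" where
  "cswap k i P x = (if k dvd (x - i) \<and> P x then x + 1
     else if k dvd (x - i - 1) \<and> P (x - 1) then x - 1 else x)"

abbreviation aff_refl :: "int \<Rightarrow> int \<Rightarrow> int \<Rightarrow> int" where
  "aff_refl k i \<equiv> cswap k i (\<lambda>_. True)"

lemma dvd_imp_not_dvd_diff_1:
  fixes k m :: int
  assumes "k \<ge> 2" "k dvd m"
  shows "\<not> k dvd (m - 1)"
proof
  assume "k dvd (m - 1)"
  then have "k dvd 1" using dvd_diff[OF assms(2)] by fastforce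
  then show False using assms(1) by (simp add: zdvd1_eq)
qed

lemma cswap_cswap:
  assumes "k \<ge> 2"
  shows "cswap k i P (cswap k i P x) = x"
proof -
  consider (up) "k dvd (x - i) \<and> P x"
    | (down) "\<not> (k dvd (x - i) \<and> P x)" "k dvd (x - 1 - i) \<and> P (x - 1)"
    | (fixed) "cswap k i P x = x"
    unfolding cswap_def by (metis diff_right_commute)
  then show ?thesis
  proof cases
    case up
    then show ?thesis
      using dvd_imp_not_dvd_diff_1[OF assms, of "x - i"] dvd_imp_not_dvd_diff_1[OF assms, of "x + 1 - i"]
      by (auto simp: cswap_def)
  next
    case down
    then have "cswap k i P x = x - 1" by (simp add: cswap_def diff_right_commute[of x 1])
    then show ?thesis using down by (simp add: cswap_def[of k i P "x - 1"])
  qed simp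
qed

lemma bij_cswap: "k \<ge> 2 \<Longrightarrow> bij (cswap k i P)"
  by (metis cswap_cswap bij_betw_byWitness subset_UNIV)

lemma cswap_displacement: "\<bar>cswap k i P x - x\<bar> \<le> 1"
  by (simp add: cswap_def)

lemma cswap_ge:
  assumes "b \<le> x" "\<not> k dvd (b - i - 1)"
  shows "b \<le> cswap k i P x"
  using assms cswap_displacement[of k i P x] by (cases "x = b") (auto simp: cswap_def)

lemma cswap_less:
  assumes "k \<ge> 2" "a < b" "\<not> (b = a + 1 \<and> k dvd (a - i) \<and> P a)"
  shows "cswap k i P a < cswap k i P b"
proof -
  have "cswap k i P a \<noteq> cswap k i P b"
    using bij_cswap[OF assms(1)] assms(2) by (metis bij_pointE less_irrefl)
  moreover have "cswap k i P a \<le> cswap k i P b"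
  proof (cases "b = a + 1")
    case True
    then show ?thesis
      using assms(3) by (auto simp: cswap_def)
  next
    case False
    then show ?thesis
      using assms(2) cswap_displacement[of k i P a] cswap_displacement[of k i P b] by linarith
  qed
  ultimately show ?thesis by simp
qed

lemma cswap_reversed_pair:
  assumes "k \<ge> 2" "x < y" "\<not> cswap k i P x < cswap k i P y"
  shows "cswap k i P x = cswap k i P y + 1 \<and> k dvd (cswap k i P y - i) \<and> P (cswap k i P y)"
proof (rule ccontr)
  let ?s = "cswap k i P"
  assume "\<not> (?s x = ?s y + 1 \<and> k dvd (?s y - i) \<and> P (?s y))"
  moreover have "?s y < ?s x"
    using assms bij_pointE[OF bij_cswap[OF assms(1)]] by (metis linorder_neqE order_less_irrefl)
  ultimately have "?s (?s y) < ?s (?s x)" by (rule cswap_less[OF assms(1), rotated])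
  then show False using assms(2) cswap_cswap[OF assms(1)] by simp
qed

lemma ASP_comp_cswap:
  assumes "k \<ge> 2" "\<gamma> \<in> ASP"
  shows "\<gamma> \<circ> cswap k i P \<in> ASP"
  using ASP_comp_bounded_displacement[OF assms(2) bij_cswap[OF assms(1)] cswap_displacement] .

lemma aff_refl_ASP: "k \<ge> 2 \<Longrightarrow> aff_refl k i \<in> ASP"
  using ASP_comp_cswap[of k id] by (simp add: ASP_def same_sign_def)

lemma cswap_eq_aff_refl:
  assumes "\<And>x. k dvd (x - i) \<Longrightarrow> P x"
  shows "cswap k i P = aff_refl k i"
proof
  fix x
  have "k dvd (x - i - 1) \<Longrightarrow> P (x - 1)"
    using assms[of "x - 1"] by (simp add: diff_right_commute[of x 1])
  then show "cswap k i P x = aff_refl k i x" using assms[of x] by (simp add: cswap_def)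
qed

lemma s_fun_comp_cswap:
  assumes "k \<ge> 2" "\<not> k dvd (b - i - 1)"
  shows "s_fun (\<gamma> \<circ> cswap k i P) a b = s_fun \<gamma> a b"
proof -
  have "{l. l \<ge> b \<and> (\<gamma> \<circ> cswap k i P) l < a} = cswap k i P ` {l. l \<ge> b \<and> \<gamma> l < a}"
    using cswap_ge[OF _ assms(2)] cswap_cswap[OF assms(1)] by (auto intro: image_eqI[of _ _ "cswap k i P _"])
  moreover have "inj_on (cswap k i P) A" for A
    using bij_is_inj[OF bij_cswap[OF assms(1)]] by (rule inj_on_subset) simp
  ultimately show ?thesis by (simp add: s_fun_def card_image)
qed

lemma s_fun_aff_refl:
  assumes "k \<ge> 2"
  shows "s_fun (aff_refl k i) l b = (if b < l then nat (l - b) else if b = l \<and> k dvd (b - i - 1) then 1 else 0)"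
proof (cases "k dvd (b - i - 1)")
  case False
  then show ?thesis
    using s_fun_comp_cswap[OF assms False, of "\<lambda>x. x"] s_fun_translation[of 0] by (simp add: o_def)
next
  case True
  then have "\<not> k dvd (b + 1 - i - 1)" and "aff_refl k i b = b - 1"
    using dvd_imp_not_dvd_diff_1[OF assms, of "b - i"] dvd_imp_not_dvd_diff_1[OF assms, of "b - i - 1"]
    by (auto simp: cswap_def)
  then show ?thesis
    using s_fun_step[OF aff_refl_ASP[OF assms, of i], of l b] True
      s_fun_comp_cswap[OF assms, of "b + 1" i "\<lambda>x. x"] s_fun_translation[of 0]
    by (simp add: o_def Suc_nat_eq_nat_zadd1)
qed

text \<open>The Demazure product \<open>\<gamma> \<star> s\<^sub>i\<close>: the pairs \<open>(x, x + 1)\<close>, \<open>x \<equiv> i (mod k)\<close>, that are ascents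
  of \<open>\<gamma>\<close> get swapped, the descents are left alone.\<close>

definition demazure_refl :: "int \<Rightarrow> int \<Rightarrow> (int \<Rightarrow> int) \<Rightarrow> int \<Rightarrow> int" where
  "demazure_refl k i \<gamma> = \<gamma> \<circ> cswap k i (\<lambda>x. \<gamma> x < \<gamma> (x + 1))"

lemma demazure_refl_ASP: "k \<ge> 2 \<Longrightarrow> \<gamma> \<in> ASP \<Longrightarrow> demazure_refl k i \<gamma> \<in> ASP"
  unfolding demazure_refl_def by (rule ASP_comp_cswap)

lemma s_fun_demazure_refl_boundary:
  assumes "k \<ge> 2" "\<gamma> \<in> ASP" "k dvd (b - i - 1)"
  shows "s_fun (demazure_refl k i \<gamma>) a b
     = s_fun \<gamma> a (b + 1) + (if min (\<gamma> (b - 1)) (\<gamma> b) < a then 1 else 0)"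
proof -
  have "\<not> k dvd (b + 1 - i - 1)" "\<not> k dvd (b - i)"
    using dvd_imp_not_dvd_diff_1[OF assms(1)] assms(3) by (metis add_diff_cancel_right' diff_right_commute)+
  then have "s_fun (demazure_refl k i \<gamma>) a (b + 1) = s_fun \<gamma> a (b + 1)"
    and "demazure_refl k i \<gamma> b = min (\<gamma> (b - 1)) (\<gamma> b)"
    using s_fun_comp_cswap[OF assms(1)] assms(3) by (auto simp: demazure_refl_def cswap_def)
  then show ?thesis
    using s_fun_step[OF demazure_refl_ASP[OF assms(1,2), of i], of a b] by simp
qed

lemma minplus_s_fun_aff_refl_off_boundary:
  assumes "k \<ge> 2" "\<gamma> \<in> ASP" "\<not> k dvd (b - i - 1)"
  shows "minplus (s_fun \<gamma>) (s_fun (aff_refl k i)) a b = s_fun \<gamma> a b"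
proof (rule minplus_eqI[where l\<^sub>0 = b])
  fix l
  show "s_fun \<gamma> a b \<le> s_fun \<gamma> a l + s_fun (aff_refl k i) l b"
    using s_fun_antimono[OF assms(2), of l b a] s_fun_le_add_dist[OF assms(2), of b l a] assms(3)
    by (cases "b \<le> l") (auto simp: s_fun_aff_refl[OF assms(1)])
qed (use assms(3) in \<open>simp add: s_fun_aff_refl[OF assms(1)]\<close>)

lemma minplus_s_fun_aff_refl_boundary:
  assumes "k \<ge> 2" "\<gamma> \<in> ASP" "k dvd (b - i - 1)"
  shows "minplus (s_fun \<gamma>) (s_fun (aff_refl k i)) a b
     = s_fun \<gamma> a (b + 1) + (if min (\<gamma> (b - 1)) (\<gamma> b) < a then 1 else 0)"
proof -
  let ?S = "s_fun \<gamma> a"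
  have S_pred: "?S (b - 1) = ?S (b + 1) + (if \<gamma> (b - 1) < a then 1 else 0) + (if \<gamma> b < a then 1 else 0)"
    using s_fun_step[OF assms(2), of a "b - 1"] s_fun_step[OF assms(2), of a b] by simp
  have lower: "?S (b + 1) + (if min (\<gamma> (b - 1)) (\<gamma> b) < a then 1 else 0) \<le> ?S l + s_fun (aff_refl k i) l b"
    for l
  proof -
    consider "l < b" | "l = b" | "b < l" by linarith
    then show ?thesis
    proof cases
      case 1
      then show ?thesis
        using s_fun_antimono[OF assms(2), of l "b - 1" a] S_pred by (auto simp: s_fun_aff_refl[OF assms(1)])
    next
      case 2
      then show ?thesis
        using s_fun_step[OF assms(2), of a b] assms(3) by (auto simp: s_fun_aff_refl[OF assms(1)])
    next
      case 3
      then show ?thesis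
        using s_fun_le_add_dist[OF assms(2), of "b + 1" l a] by (auto simp: s_fun_aff_refl[OF assms(1)])
    qed
  qed
  have attained: "\<exists>l. ?S (b + 1) + (if min (\<gamma> (b - 1)) (\<gamma> b) < a then 1 else 0)
      = ?S l + s_fun (aff_refl k i) l b"
  proof (cases "min (\<gamma> (b - 1)) (\<gamma> b) < a")
    case True
    then show ?thesis by (intro exI[of _ "b + 1"]) (simp add: s_fun_aff_refl[OF assms(1)])
  next
    case False
    then show ?thesis
      using S_pred by (intro exI[of _ "b - 1"]) (simp add: s_fun_aff_refl[OF assms(1)] min_less_iff_disj)
  qed
  then show ?thesis using lower by (metis minplus_eqI)
qed

lemma s_fun_demazure_refl:
  assumes "k \<ge> 2" "\<gamma> \<in> ASP"
  shows "s_fun (demazure_refl k i \<gamma>) = minplus (s_fun \<gamma>) (s_fun (aff_refl k i))"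
proof (intro ext)
  fix a b
  show "s_fun (demazure_refl k i \<gamma>) a b = minplus (s_fun \<gamma>) (s_fun (aff_refl k i)) a b"
  proof (cases "k dvd (b - i - 1)")
    case True
    then show ?thesis
      using s_fun_demazure_refl_boundary[OF assms] minplus_s_fun_aff_refl_boundary[OF assms] by simp
  next
    case False
    then show ?thesis
      using s_fun_comp_cswap[OF assms(1)] minplus_s_fun_aff_refl_off_boundary[OF assms]
      by (simp add: demazure_refl_def)
  qed
qed

section \<open>Sign-changing inversions\<close>

lemma finite_sign_changing_inversions:
  assumes "\<gamma> \<in> ASP"
  shows "finite {(x, y). x < y \<and> \<gamma> x > 0 \<and> \<gamma> y \<le> 0}"
proof -
  let ?B = "{n. \<not> same_sign n (\<gamma> n)}"
  have B: "finite ?B" using assms by (simp add: ASP_def)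
  have "{(x, y). x < y \<and> \<gamma> x > 0 \<and> \<gamma> y \<le> 0}
      \<subseteq> (SIGMA x:?B. ?B \<union> {x..0}) \<union> prod.swap ` (SIGMA y:?B. {1..y})"
    by (auto simp: same_sign_def image_iff)
  moreover have "finite ((SIGMA x:?B. ?B \<union> {x..0}) \<union> prod.swap ` (SIGMA y:?B. {1..y}))"
    using B by auto
  ultimately show ?thesis by (rule finite_subset)
qed

text \<open>Every position strictly between a positive value at \<open>x + 1\<close> and a nonpositive value at \<open>y\<close>
  forms a sign-changing inversion with one of the two ends.\<close>

lemma sci_ge_gap:
  assumes "\<gamma> \<in> ASP" "x < y" "\<gamma> (x + 1) > 0" "\<gamma> y \<le> 0"
  shows "nat (y - x - 1) \<le> sci \<gamma>"
proof -
  define f where "f z = (if \<gamma> z \<le> 0 then (x + 1, z) else (z, y))" for z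
  have "inj_on f {x + 2..y}" by (auto simp: inj_on_def f_def split: if_splits)
  then have "nat (y - x - 1) = card (f ` {x + 2..y})" by (simp add: card_image)
  also have "\<dots> \<le> sci \<gamma>"
    unfolding sci_def
  proof (rule card_mono[OF finite_sign_changing_inversions[OF assms(1)]])
    show "f ` {x + 2..y} \<subseteq> {(x', y'). x' < y' \<and> \<gamma> x' > 0 \<and> \<gamma> y' \<le> 0}"
      using assms by (auto simp: f_def) (metis order_le_less)
  qed
  finally show ?thesis .
qed

lemma card_sign_ascents_in_residue_class_le_1:
  fixes k i :: int
  assumes "\<gamma> \<in> ASP" "int (sci \<gamma>) + 2 \<le> k"
  defines "X \<equiv> {x. k dvd (x - i) \<and> \<gamma> x \<le> 0 \<and> \<gamma> (x + 1) > 0}"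
  shows "finite X \<and> card X \<le> 1"
proof (cases "X = {}")
  case False
  then obtain x where x: "x \<in> X" by blast
  have "y = x" if "y \<in> X" for y
  proof (rule ccontr)
    assume "y \<noteq> x"
    have "k dvd (y - x)" "k dvd (x - y)"
      using x \<open>y \<in> X\<close> dvd_diff[of k "y - i" "x - i"] dvd_diff[of k "x - i" "y - i"] by (simp_all add: X_def)
    then obtain u v where uv: "u < v" "k dvd (v - u)" "\<gamma> (u + 1) > 0" "\<gamma> v \<le> 0"
      using x \<open>y \<in> X\<close> \<open>y \<noteq> x\<close> unfolding X_def by (metis linorder_neqE mem_Collect_eq)
    then have "k \<le> v - u" by (simp add: zdvd_imp_le)
    then show False using sci_ge_gap[OF assms(1) uv(1,3,4)] assms(2) by linarith
  qed
  then have "X \<subseteq> {x}" by blast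
  then show ?thesis using card_mono[of "{x}" X] finite_subset[of X "{x}"] by simp
qed simp

lemma sci_comp_cswap_le:
  assumes "k \<ge> 2" "\<gamma> \<in> ASP" "int (sci \<gamma>) + 2 \<le> k"
  shows "sci (\<gamma> \<circ> cswap k i P) \<le> sci \<gamma> + 1"
proof -
  let ?s = "cswap k i P"
  let ?S = "\<lambda>\<gamma>. {(x, y). x < y \<and> \<gamma> x > (0::int) \<and> \<gamma> y \<le> 0}"
  \<comment> \<open>the swapped adjacent pairs that can become sign-changing inversions\<close>
  define X where "X = {x. k dvd (x - i) \<and> \<gamma> x \<le> 0 \<and> \<gamma> (x + 1) > 0}"
  have X: "finite X \<and> card X \<le> 1"
    unfolding X_def by (rule card_sign_ascents_in_residue_class_le_1[OF assms(2,3)])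
  have "?S (\<gamma> \<circ> ?s) \<subseteq> (\<lambda>(u, v). (?s u, ?s v)) ` (?S \<gamma> \<union> (\<lambda>x. (x + 1, x)) ` X)"
  proof
    fix p
    assume "p \<in> ?S (\<gamma> \<circ> ?s)"
    then obtain x y where xy: "p = (x, y)" "x < y" "\<gamma> (?s x) > 0" "\<gamma> (?s y) \<le> 0" by auto
    have "(?s x, ?s y) \<in> ?S \<gamma> \<union> (\<lambda>x. (x + 1, x)) ` X"
    proof (cases "?s x < ?s y")
      case False
      then show ?thesis using xy cswap_reversed_pair[OF assms(1) xy(2) False] by (auto simp: X_def)
    qed (use xy in simp)
    moreover have "p = (\<lambda>(u, v). (?s u, ?s v)) (?s x, ?s y)"
      using xy cswap_cswap[OF assms(1)] by simp
    ultimately show "p \<in> (\<lambda>(u, v). (?s u, ?s v)) ` (?S \<gamma> \<union> (\<lambda>x. (x + 1, x)) ` X)"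
      by (rule rev_image_eqI)
  qed
  then have "sci (\<gamma> \<circ> ?s) \<le> card ((\<lambda>(u, v). (?s u, ?s v)) ` (?S \<gamma> \<union> (\<lambda>x. (x + 1, x)) ` X))"
    unfolding sci_def using finite_sign_changing_inversions[OF assms(2)] X
    by (intro card_mono finite_imageI finite_UnI) auto
  also have "\<dots> \<le> card (?S \<gamma> \<union> (\<lambda>x. (x + 1, x)) ` X)"
    by (rule card_image_le) (use finite_sign_changing_inversions[OF assms(2)] X in simp)
  also have "\<dots> \<le> card (?S \<gamma>) + card ((\<lambda>x. (x + 1, x)) ` X)"
    by (rule card_Un_le)
  also have "\<dots> \<le> sci \<gamma> + 1"
    using X card_image_le[of X "\<lambda>x. (x + 1, x)"] by (simp add: sci_def)
  finally show ?thesis .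
qed

lemma sci_comp_translation: "sci (\<gamma> \<circ> (\<lambda>x. x + c)) = sci \<gamma>"
proof -
  let ?S = "\<lambda>\<gamma>. {(x, y). x < y \<and> \<gamma> x > (0::int) \<and> \<gamma> y \<le> 0}"
  have "?S (\<gamma> \<circ> (\<lambda>x. x + c)) = (\<lambda>(x, y). (x - c, y - c)) ` ?S \<gamma>"
  proof
    show "?S (\<gamma> \<circ> (\<lambda>x. x + c)) \<subseteq> (\<lambda>(x, y). (x - c, y - c)) ` ?S \<gamma>"
    proof
      fix p
      assume "p \<in> ?S (\<gamma> \<circ> (\<lambda>x. x + c))"
      then obtain x y where "p = (x, y)" "x < y" "\<gamma> (x + c) > 0" "\<gamma> (y + c) \<le> 0" by auto
      then show "p \<in> (\<lambda>(x, y). (x - c, y - c)) ` ?S \<gamma>"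
        by (intro image_eqI[of _ _ "(x + c, y + c)"]) auto
    qed
  qed auto
  moreover have "inj_on (\<lambda>(x, y). (x - c, y - c)) (?S \<gamma>)" by (auto simp: inj_on_def)
  ultimately show ?thesis by (simp add: sci_def card_image)
qed

section \<open>Inversions of extended affine permutations\<close>

lemma inversions_add_mult_period:
  assumes "\<beta> \<in> EA k" "(a, b) \<in> inversions \<beta>"
  shows "(a + j * k, b + j * k) \<in> inversions \<beta>"
  using assms(2) EA_add_mult_period[OF assms(1), of a j] EA_add_mult_period[OF assms(1), of b j]
  by (simp add: inversions_def)

lemma dvd_abs_less_imp_eq_0:
  fixes k d :: int
  assumes "k dvd d" "\<bar>d\<bar> < k"
  shows "d = 0"
  using dvd_imp_le_int[OF _ assms(1)] assms(2) by force

text \<open>Inversions whose first entry lies in the window \<open>[c, c + k)\<close>: one from each class of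
  \<open>k_equiv k\<close>.\<close>

definition window_inversions :: "int \<Rightarrow> int \<Rightarrow> (int \<Rightarrow> int) \<Rightarrow> (int \<times> int) set" where
  "window_inversions k c \<beta> = {p \<in> inversions \<beta>. c \<le> fst p \<and> fst p < c + k}"

lemma window_representative:
  assumes "\<beta> \<in> EA k" "k \<ge> 1" "(a, b) \<in> inversions \<beta>"
  obtains j where "(a + j * k, b + j * k) \<in> window_inversions k c \<beta>"
proof
  let ?j = "- ((a - c) div k)"
  have "a + ?j * k = c + (a - c) mod k"
    by (simp add: algebra_simps minus_mod_eq_mult_div[symmetric])
  then have "c \<le> a + ?j * k \<and> a + ?j * k < c + k"
    using assms(2) by simp
  then show "(a + ?j * k, b + ?j * k) \<in> window_inversions k c \<beta>"
    using inversions_add_mult_period[OF assms(1,3), of ?j] by (simp add: window_inversions_def)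
qed

lemma finite_window_inversions:
  assumes "\<beta> \<in> EA k" "k \<ge> 1"
  shows "finite (window_inversions k c \<beta>)"
proof -
  obtain C where C: "\<And>x. \<bar>\<beta> x - x\<bar> \<le> C" using EA_displacement_bounded[OF assms] by blast
  have "window_inversions k c \<beta> \<subseteq> {c..<c + k} \<times> {c..c + k + 2 * C}"
  proof
    fix p
    assume "p \<in> window_inversions k c \<beta>"
    then show "p \<in> {c..<c + k} \<times> {c..c + k + 2 * C}"
      using C[of "fst p"] C[of "snd p"] by (auto simp: window_inversions_def inversions_def abs_le_iff)
  qed
  then show ?thesis by (rule finite_subset) simp
qed

lemma window_inversions_k_equiv_eq:
  assumes "p \<in> window_inversions k c \<beta>" "q \<in> window_inversions k c \<beta>" "(p, q) \<in> k_equiv k"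
  shows "p = q"
proof -
  obtain a b a' b' where ab: "p = (a, b)" "q = (a', b')" by fastforce
  then have "a - a' = b - b'" "k dvd (a - a')" using assms(3) by (auto simp: k_equiv_def)
  moreover have "\<bar>a - a'\<bar> < k" using assms(1,2) ab by (auto simp: window_inversions_def)
  ultimately show ?thesis using ab dvd_abs_less_imp_eq_0[of k "a - a'"] by simp
qed

lemma equiv_k_equiv: "equiv A (k_equiv k \<inter> (A \<times> A))"
proof (rule equivI)
  show "trans (k_equiv k \<inter> (A \<times> A))"
  proof (rule transI)
    fix p q r
    assume "(p, q) \<in> k_equiv k \<inter> (A \<times> A)" "(q, r) \<in> k_equiv k \<inter> (A \<times> A)"
    then show "(p, r) \<in> k_equiv k \<inter> (A \<times> A)"
      using dvd_add[of k "fst p - fst q" "fst q - fst r"] by (auto simp: k_equiv_def)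
  qed
qed (auto simp: refl_on_def sym_def k_equiv_def dvd_diff_commute)

lemma inv_k_eq_card_window_inversions:
  assumes "\<beta> \<in> EA k" "k \<ge> 1"
  shows "inv_k k \<beta> = card (window_inversions k c \<beta>)"
proof -
  let ?I = "inversions \<beta>"
  let ?E = "k_equiv k \<inter> (?I \<times> ?I)"
  let ?W = "window_inversions k c \<beta>"
  have equiv: "equiv ?I ?E" by (rule equiv_k_equiv)
  have "bij_betw (\<lambda>p. ?E `` {p}) ?W (?I // ?E)"
  proof (rule bij_betw_imageI)
    show "inj_on (\<lambda>p. ?E `` {p}) ?W"
    proof (rule inj_onI)
      fix p q
      assume pq: "p \<in> ?W" "q \<in> ?W" "?E `` {p} = ?E `` {q}"
      then have "(p, q) \<in> k_equiv k"
        using eq_equiv_class[OF pq(3) equiv] by (auto simp: window_inversions_def)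
      then show "p = q" using window_inversions_k_equiv_eq pq(1,2) by blast
    qed
  next
    show "(\<lambda>p. ?E `` {p}) ` ?W = ?I // ?E"
    proof
      show "(\<lambda>p. ?E `` {p}) ` ?W \<subseteq> ?I // ?E"
        by (auto simp: window_inversions_def intro: quotientI)
    next
      show "?I // ?E \<subseteq> (\<lambda>p. ?E `` {p}) ` ?W"
      proof
        fix X
        assume "X \<in> ?I // ?E"
        then obtain a b where ab: "(a, b) \<in> ?I" "X = ?E `` {(a, b)}" by (auto elim: quotientE)
        obtain j where j: "(a + j * k, b + j * k) \<in> ?W"
          using window_representative[OF assms ab(1)] .
        then have "((a, b), (a + j * k, b + j * k)) \<in> ?E"
          using ab(1) by (auto simp: k_equiv_def window_inversions_def)
        then have "X = ?E `` {(a + j * k, b + j * k)}"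
          using ab(2) equiv_class_eq[OF equiv] by simp
        then show "X \<in> (\<lambda>p. ?E `` {p}) ` ?W" using j by blast
      qed
    qed
  qed
  then show ?thesis by (simp add: inv_k_def bij_betw_same_card)
qed

lemma inv_k_eq_0_iff:
  assumes "\<beta> \<in> EA k" "k \<ge> 1"
  shows "inv_k k \<beta> = 0 \<longleftrightarrow> inversions \<beta> = {}"
proof
  assume "inv_k k \<beta> = 0"
  then have empty: "window_inversions k 0 \<beta> = {}"
    using inv_k_eq_card_window_inversions[OF assms] finite_window_inversions[OF assms] by simp
  show "inversions \<beta> = {}"
  proof (rule equals0I)
    fix p
    assume "p \<in> inversions \<beta>"
    moreover obtain a b where "p = (a, b)" by fastforce
    ultimately obtain j where "(a + j * k, b + j * k) \<in> window_inversions k 0 \<beta>"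
      using window_representative[OF assms] by blast
    then show False using empty by simp
  qed
next
  assume "inversions \<beta> = {}"
  then show "inv_k k \<beta> = 0"
    by (simp add: inv_k_eq_card_window_inversions[OF assms, of 0] window_inversions_def)
qed

lemma descent_if_inversion:
  assumes "(a, b) \<in> inversions \<beta>"
  shows "\<exists>i. \<beta> (i + 1) < \<beta> i"
proof (rule ccontr)
  assume no_descent: "\<nexists>i. \<beta> (i + 1) < \<beta> i"
  have "\<beta> a \<le> \<beta> x" if "a \<le> x" for x
    using that
  proof (induction x rule: int_ge_induct)
    case (step x)
    then show ?case using no_descent by (meson not_less order_trans)
  qed simp
  then have "\<beta> a \<le> \<beta> b" using assms by (simp add: inversions_def)
  then show False using assms by (simp add: inversions_def)
qed

lemma translation_if_no_inversions:
  assumes "bij \<beta>" "inversions \<beta> = {}"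
  shows "\<beta> = (\<lambda>x. x + \<beta> 0)"
proof -
  have mono: "\<beta> x < \<beta> y" if "x < y" for x y
  proof -
    have "\<not> \<beta> y < \<beta> x" using that assms(2) unfolding inversions_def by blast
    moreover have "\<beta> x \<noteq> \<beta> y" using that bij_is_inj[OF assms(1)] by (metis injD less_irrefl)
    ultimately show ?thesis by simp
  qed
  have step: "\<beta> (x + 1) = \<beta> x + 1" for x
  proof -
    obtain y where y: "\<beta> y = \<beta> x + 1" using bij_pointE[OF assms(1)] by metis
    then have "x < y" using mono[of y x] by (cases "y \<le> x") (auto simp: order_le_less)
    then have "\<beta> (x + 1) \<le> \<beta> y" using mono[of "x + 1" y] by (cases "y = x + 1") auto
    then show ?thesis using y mono[of x "x + 1"] by simp
  qed
  have "\<beta> x = x + \<beta> 0" for x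
  proof (induction x rule: int_induct[of _ 0])
    case (step2 x)
    then show ?case using step[of "x - 1"] by simp
  qed (simp_all add: step)
  then show ?thesis by (rule ext)
qed

lemma aff_refl_periodic: "aff_refl k i (x + k) = aff_refl k i x + k"
proof -
  have "k dvd (x + k - i) \<longleftrightarrow> k dvd (x - i)" "k dvd (x + k - i - 1) \<longleftrightarrow> k dvd (x - i - 1)"
    by (simp_all add: diff_add_eq[symmetric] add_diff_eq[symmetric])
  then show ?thesis by (simp add: cswap_def)
qed

lemma EA_comp_aff_refl:
  assumes "\<beta> \<in> EA k" "k \<ge> 2"
  shows "\<beta> \<circ> aff_refl k i \<in> EA k"
  using assms bij_cswap[OF assms(2)] aff_refl_periodic[of k i] by (simp add: EA_def bij_comp)

lemma aff_refl_window:
  assumes "k \<ge> 2" "i \<le> a" "a < i + k"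
  shows "aff_refl k i a = (if a = i then i + 1 else if a = i + 1 then i else a)"
proof -
  have "k dvd (a - i) \<longleftrightarrow> a = i"
    using assms dvd_abs_less_imp_eq_0[of k "a - i"] by auto
  moreover have "k dvd (a - i - 1) \<longleftrightarrow> a = i + 1"
    using assms dvd_abs_less_imp_eq_0[of k "a - i - 1"] dvd_imp_not_dvd_diff_1[OF assms(1), of 0]
    by (cases "a = i") auto
  ultimately show ?thesis by (simp add: cswap_def)
qed

lemma aff_refl_maps_window_inversions:
  assumes "k \<ge> 2" "(a, b) \<in> window_inversions k i \<beta>" "(a, b) \<noteq> (i, i + 1)"
  shows "(aff_refl k i a, aff_refl k i b) \<in> window_inversions k i (\<beta> \<circ> aff_refl k i)"
    and "(aff_refl k i a, aff_refl k i b) \<noteq> (i, i + 1)"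
proof -
  let ?s = "aff_refl k i"
  have ab: "i \<le> a" "a < i + k" "a < b" "\<beta> b < \<beta> a"
    using assms(2) by (auto simp: window_inversions_def inversions_def)
  have sa: "?s a = (if a = i then i + 1 else if a = i + 1 then i else a)"
    by (rule aff_refl_window[OF assms(1) ab(1,2)])
  have "\<not> (b = a + 1 \<and> k dvd (a - i))"
    using assms(3) ab dvd_abs_less_imp_eq_0[of k "a - i"] by auto
  then have "?s a < ?s b" using cswap_less[OF assms(1) ab(3), of i "\<lambda>_. True"] by simp
  moreover have "(\<beta> \<circ> ?s) (?s a) = \<beta> a" "(\<beta> \<circ> ?s) (?s b) = \<beta> b"
    using cswap_cswap[OF assms(1)] by simp_all
  ultimately show "(?s a, ?s b) \<in> window_inversions k i (\<beta> \<circ> ?s)"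
    using sa ab assms(1) by (auto simp: window_inversions_def inversions_def)
  show "(?s a, ?s b) \<noteq> (i, i + 1)"
  proof
    assume swapped: "(?s a, ?s b) = (i, i + 1)"
    have "b = ?s (?s b)" using cswap_cswap[OF assms(1)] by simp
    also have "\<dots> = ?s (i + 1)" using swapped by simp
    also have "\<dots> = i" using aff_refl_window[OF assms(1), of i "i + 1"] assms(1) by simp
    finally show False using ab(1,3) by simp
  qed
qed

lemma aff_refl_image_window_inversions:
  assumes "k \<ge> 2" "\<beta> (i + 1) < \<beta> i"
  shows "(\<lambda>(a, b). (aff_refl k i a, aff_refl k i b)) ` window_inversions k i (\<beta> \<circ> aff_refl k i)
    = window_inversions k i \<beta> - {(i, i + 1)}"
proof
  let ?s = "aff_refl k i"
  let ?W = "window_inversions k i"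
  have "(i, i + 1) \<notin> ?W (\<beta> \<circ> ?s)"
    using assms aff_refl_window[OF assms(1), of i i] aff_refl_window[OF assms(1), of i "i + 1"]
    by (simp add: window_inversions_def inversions_def)
  moreover have "\<beta> \<circ> ?s \<circ> ?s = \<beta>" using cswap_cswap[OF assms(1)] by (simp add: fun_eq_iff)
  ultimately show "(\<lambda>(a, b). (?s a, ?s b)) ` ?W (\<beta> \<circ> ?s) \<subseteq> ?W \<beta> - {(i, i + 1)}"
    using aff_refl_maps_window_inversions[OF assms(1), of _ _ i "\<beta> \<circ> ?s"] by auto
  show "?W \<beta> - {(i, i + 1)} \<subseteq> (\<lambda>(a, b). (?s a, ?s b)) ` ?W (\<beta> \<circ> ?s)"
  proof
    fix p
    assume p: "p \<in> ?W \<beta> - {(i, i + 1)}"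
    obtain a b where ab: "p = (a, b)" by fastforce
    then have "(?s a, ?s b) \<in> ?W (\<beta> \<circ> ?s)"
      using aff_refl_maps_window_inversions(1)[OF assms(1)] p by simp
    moreover have "p = (\<lambda>(a, b). (?s a, ?s b)) (?s a, ?s b)" using ab cswap_cswap[OF assms(1)] by simp
    ultimately show "p \<in> (\<lambda>(a, b). (?s a, ?s b)) ` ?W (\<beta> \<circ> ?s)" by blast
  qed
qed

lemma inv_k_comp_aff_refl:
  assumes "k \<ge> 2" "\<beta> \<in> EA k" "\<beta> (i + 1) < \<beta> i"
  shows "inv_k k \<beta> = inv_k k (\<beta> \<circ> aff_refl k i) + 1"
proof -
  let ?s = "aff_refl k i"
  let ?W = "window_inversions k i"
  let ?swap = "\<lambda>(a, b). (?s a, ?s b)"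
  have "k \<ge> 1" using assms(1) by simp
  have "inj_on ?swap (?W (\<beta> \<circ> ?s))"
  proof (rule inj_on_inverseI)
    show "?swap (?swap p) = p" for p using cswap_cswap[OF assms(1)] by (cases p) simp
  qed
  then have "card (?W (\<beta> \<circ> ?s)) = card (?W \<beta> - {(i, i + 1)})"
    using aff_refl_image_window_inversions[OF assms(1,3)] by (metis card_image)
  moreover have "finite (?W \<beta>)" by (rule finite_window_inversions[OF assms(2) \<open>k \<ge> 1\<close>])
  moreover have "(i, i + 1) \<in> ?W \<beta>"
    using assms(1,3) by (simp add: window_inversions_def inversions_def)
  ultimately have "card (?W \<beta>) = card (?W (\<beta> \<circ> ?s)) + 1"
    using card_gt_0_iff[of "?W \<beta>"] by (auto simp: card_Diff_singleton)
  then show ?thesis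
    using inv_k_eq_card_window_inversions[OF assms(2) \<open>k \<ge> 1\<close>]
      inv_k_eq_card_window_inversions[OF EA_comp_aff_refl[OF assms(2,1)] \<open>k \<ge> 1\<close>]
    by simp
qed

lemma demazure_refl_comp_aff_refl:
  assumes "k \<ge> 2" "\<beta> \<in> EA k" "\<beta> (i + 1) < \<beta> i"
  shows "demazure_refl k i (\<beta> \<circ> aff_refl k i) = \<beta>"
proof -
  let ?s = "aff_refl k i"
  text \<open>By periodicity every pair \<open>(x, x + 1)\<close>, \<open>x \<equiv> i (mod k)\<close>, is a descent of \<open>\<beta>\<close>, hence an
    ascent of \<open>\<beta> \<circ> s\<^sub>i\<close>, so the Demazure product swaps all of them back.\<close>
  have ascent: "(\<beta> \<circ> ?s) x < (\<beta> \<circ> ?s) (x + 1)" if "k dvd (x - i)" for x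
  proof -
    from that obtain j where "x - i = k * j" by (rule dvdE)
    then have x: "x = i + j * k" by (simp add: algebra_simps)
    have "?s x = x + 1" "?s (x + 1) = x"
      using that dvd_imp_not_dvd_diff_1[OF assms(1), of "x - i"] dvd_imp_not_dvd_diff_1[OF assms(1), of "x + 1 - i"]
      by (auto simp: cswap_def)
    moreover have "\<beta> (x + 1) < \<beta> x"
      using assms(3) EA_add_mult_period[OF assms(2), of i j] EA_add_mult_period[OF assms(2), of "i + 1" j] x
      by (simp add: algebra_simps)
    ultimately show ?thesis by simp
  qed
  then have "cswap k i (\<lambda>x. (\<beta> \<circ> ?s) x < (\<beta> \<circ> ?s) (x + 1)) = ?s"
    by (rule cswap_eq_aff_refl)
  then show ?thesis
    using cswap_cswap[OF assms(1)] by (simp add: demazure_refl_def fun_eq_iff)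
qed

lemma s_fun_eq_minplus_descent:
  assumes "k \<ge> 2" "\<beta> \<in> EA k" "\<beta> (i + 1) < \<beta> i"
  shows "s_fun \<beta> = minplus (s_fun (\<beta> \<circ> aff_refl k i)) (s_fun (aff_refl k i))"
proof -
  have "\<beta> \<circ> aff_refl k i \<in> ASP"
    using EA_subset_ASP[of k] EA_comp_aff_refl[OF assms(2,1)] assms(1) by auto
  then show ?thesis
    using s_fun_demazure_refl[OF assms(1)] demazure_refl_comp_aff_refl[OF assms] by metis
qed

lemma demazure_EA_exists_sci_le:
  assumes "\<alpha> \<in> ASP" "\<beta> \<in> EA k" "k \<ge> 1" "int (sci \<alpha> + inv_k k \<beta>) < k"
  shows "\<exists>\<gamma>\<in>ASP. s_fun \<gamma> = minplus (s_fun \<alpha>) (s_fun \<beta>) \<and> sci \<gamma> \<le> sci \<alpha> + inv_k k \<beta>"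
  using assms(2,4)
proof (induction "inv_k k \<beta>" arbitrary: \<beta>)
  case 0
  define c where "c = \<beta> 0"
  have translation: "\<beta> = (\<lambda>x. x + c)"
    using 0 translation_if_no_inversions inv_k_eq_0_iff[OF _ assms(3)] by (simp add: EA_def c_def)
  have "s_fun (\<alpha> \<circ> (\<lambda>x. x + c)) = minplus (s_fun \<alpha>) (s_fun \<beta>)"
    unfolding translation using minplus_s_fun_translation[OF assms(1)]
    by (simp add: fun_eq_iff s_fun_comp_translation)
  moreover have "sci (\<alpha> \<circ> (\<lambda>x. x + c)) \<le> sci \<alpha> + inv_k k \<beta>"
    using sci_comp_translation[of \<alpha> c] by simp
  ultimately show ?case using ASP_comp_translation[OF assms(1)] by blast
next
  case (Suc n \<beta>)
  have "k \<ge> 2" using Suc.prems(2) Suc.hyps(2)[symmetric] by simp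
  have "inversions \<beta> \<noteq> {}"
    using inv_k_eq_0_iff[OF Suc.prems(1) assms(3)] Suc.hyps(2) by simp
  then obtain a b where "(a, b) \<in> inversions \<beta>" by auto
  then obtain i where descent: "\<beta> (i + 1) < \<beta> i"
    using descent_if_inversion by blast
  let ?\<beta>' = "\<beta> \<circ> aff_refl k i"
  have \<beta>': "?\<beta>' \<in> EA k" "n = inv_k k ?\<beta>'"
    using EA_comp_aff_refl[OF Suc.prems(1) \<open>k \<ge> 2\<close>] inv_k_comp_aff_refl[OF \<open>k \<ge> 2\<close> Suc.prems(1) descent]
      Suc.hyps(2) by simp_all
  moreover have "int (sci \<alpha> + inv_k k ?\<beta>') < k"
    using Suc.prems(2) Suc.hyps(2) \<beta>'(2) by simp
  ultimately obtain \<gamma> where \<gamma>: "\<gamma> \<in> ASP" "s_fun \<gamma> = minplus (s_fun \<alpha>) (s_fun ?\<beta>')"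
    and sci_\<gamma>: "sci \<gamma> \<le> sci \<alpha> + n"
    using Suc.hyps(1)[OF \<beta>'(2,1)] \<beta>'(2) by auto
  have "minplus (s_fun \<alpha>) (s_fun \<beta>)
      = minplus (minplus (s_fun \<alpha>) (s_fun ?\<beta>')) (s_fun (aff_refl k i))"
    using s_fun_eq_minplus_descent[OF \<open>k \<ge> 2\<close> Suc.prems(1) descent] by (simp add: minplus_assoc)
  also have "\<dots> = s_fun (demazure_refl k i \<gamma>)"
    unfolding \<gamma>(2)[symmetric] by (rule s_fun_demazure_refl[OF \<open>k \<ge> 2\<close> \<gamma>(1), symmetric])
  finally have "minplus (s_fun \<alpha>) (s_fun \<beta>) = s_fun (demazure_refl k i \<gamma>)" .
  moreover have "sci (demazure_refl k i \<gamma>) \<le> sci \<gamma> + 1"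
    unfolding demazure_refl_def using sci_\<gamma> Suc.prems(2) Suc.hyps(2)
    by (intro sci_comp_cswap_le[OF \<open>k \<ge> 2\<close> \<gamma>(1)]) linarith
  ultimately show ?case
    using demazure_refl_ASP[OF \<open>k \<ge> 2\<close> \<gamma>(1)] sci_\<gamma> Suc.hyps(2)[symmetric]
    by (intro bexI[of _ "demazure_refl k i \<gamma>"] conjI) simp_all
qed

theorem mainTheorem18:
  fixes k :: int and \<alpha> \<beta> :: "int \<Rightarrow> int"
  assumes "k \<ge> 1" and "\<alpha> \<in> ASP" and "\<beta> \<in> EA k"
    and "k > int (sci \<alpha> + inv_k k \<beta>)"
  shows "sci (\<alpha> \<star> \<beta>) \<le> sci \<alpha> + inv_k k \<beta>"
proof -
  obtain \<gamma> where "\<gamma> \<in> ASP" "s_fun \<gamma> = minplus (s_fun \<alpha>) (s_fun \<beta>)"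
    and "sci \<gamma> \<le> sci \<alpha> + inv_k k \<beta>"
    using demazure_EA_exists_sci_le[OF assms(2,3,1,4)] by blast
  moreover from this have "\<alpha> \<star> \<beta> = \<gamma>" by (intro demazure_eqI) simp_all
  ultimately show ?thesis by simp
qed

end
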